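(* Let $\|\cdot\|$ be a norm on $\mathbb R^n$. Suppose $\Psi=\delta_C$ for a closed convex set $C\subseteq\mathbb R^n$ that is $p$-uniformly convex with constant $\mu>0$ for some $p\ge2$; $f$ is $q$-uniformly smooth on $C$ with constant $L>0$ for some $q\in(1,2]$; $f^\star:=\min_{x\in C}f(x)$ is finite and $X^\star:=\{x\in C:f(x)=f^\star\}$ is nonempty; and $f$ satisfies the $\gamma$-Hölderian error bound on $C$ with constant $K>0$ for some $\gamma\in[0,1]$. Then $(\mathcal D,\mathrm{gap},\mathrm{subopt})$ satisfies the $(q,r)$ weak growth property with $r=\gamma q/p$ and $M=L(pK/\mu)^{q/p}$.
   Context: Let $f:\mathbb{R}^n\to\mathbb{R}\cup\{\infty\}$ be a closed proper convex function differentiable on $C$, and $\Psi=\delta_C$ the indicator function of $C$ (so $\arg\min_y\{\langle g,y\rangle+\Psi(y)\}=\arg\min_{y\in C}\langle g,y\rangle=\partial\Psi^*(-g)$). $f^*,\Psi^*$ denote conjugates. $D_f(y,x)=f(y)-f(x)-\langle\nabla f(x),y-x\rangle$. $\mathrm{gap}(x,u)=f(x)+\Psi(x)+f^*(u)+\Psi^*(-u)$. $\mathcal{D}(x,s,\theta)=D_f(x+\theta(s-x),x)+\Psi(x+\theta(s-x))-(1-\theta)\Psi(x)-\theta\Psi(s)$. $\mathrm{subopt}(x)=f(x)+\Psi(x)-\min_y\{f(y)+\Psi(y)\}$. $\|\cdot\|^*$ is the dual norm. $(q,r)$ weak growth property: there is a finite $M>0$ such that for all $x\in\mathrm{dom}(\Psi)$,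 $g=\nabla f(x)$, $s\in\partial\Psi^*(-g)$: $\mathcal D(x,s,\theta)\,\mathrm{subopt}(x)^{1-r}\le\frac{M\theta^q}{q}\mathrm{gap}(x,g)$ for all $\theta\in[0,1]$. $f$ is $q$-uniformly smooth on $C$ with constant $L$ if for all $x,y\in C$, $\theta\in[0,1]$: $f(x+\theta(y-x))\ge(1-\theta)f(x)+\theta f(y)-\frac Lq\theta(1-\theta)\|y-x\|^q$. $C$ is $p$-uniformly convex with constant $\mu$ if for all $x,y\in C$, $\theta\in[0,1]$, $\|z\|\le1$: $x+\theta(y-x)+\frac\mu p\theta(1-\theta)\|y-x\|^pz\in C$. $\gamma$-Hölderian error bound on $C$ with constant $K$: for all $x\in C$, $\min_{y\in X^\star}\|x-y\|\le K(f(x)-f^\star)^\gamma$. *)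

theory Defs
  imports "HOL-Analysis.Analysis"
begin

definition is_norm :: "(real^'n \<Rightarrow> real) \<Rightarrow> bool" where
  "is_norm N \<longleftrightarrow> (\<forall>x. 0 \<le> N x) \<and> (\<forall>x. N x = 0 \<longleftrightarrow> x = 0)
     \<and> (\<forall>c x. N (c *\<^sub>R x) = \<bar>c\<bar> * N x) \<and> (\<forall>x y. N (x + y) \<le> N x + N y)"

text \<open>Real power with the convention a^0 = 1.\<close>
definition rpow :: "real \<Rightarrow> real \<Rightarrow> real" where
  "rpow a e = (if e = 0 then 1 else a powr e)"

definition closed_proper_convex :: "(real^'n \<Rightarrow> ereal) \<Rightarrow> bool" where
  "closed_proper_convex f \<longleftrightarrow>
     convex {(x, t::real). f x \<le> ereal t} \<and> closed {(x, t::real). f x \<le> ereal t}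
     \<and> (\<forall>x. f x \<noteq> -\<infinity>) \<and> (\<exists>x. f x \<noteq> \<infinity>)"

definition is_grad :: "(real^'n \<Rightarrow> ereal) \<Rightarrow> real^'n \<Rightarrow> real^'n \<Rightarrow> bool" where
  "is_grad f x g \<longleftrightarrow> (\<forall>\<^sub>F y in nhds x. \<bar>f y\<bar> \<noteq> \<infinity>)
     \<and> ((\<lambda>y. real_of_ereal (f y)) has_derivative (\<lambda>h. g \<bullet> h)) (at x)"

definition differentiable_on_set :: "(real^'n \<Rightarrow> ereal) \<Rightarrow> (real^'n) set \<Rightarrow> bool" where
  "differentiable_on_set f C \<longleftrightarrow> (\<forall>x\<in>C. \<exists>g. is_grad f x g)"

definition ind :: "(real^'n) set \<Rightarrow> real^'n \<Rightarrow> ereal" where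
  "ind C x = (if x \<in> C then 0 else \<infinity>)"

definition econj :: "(real^'n \<Rightarrow> ereal) \<Rightarrow> real^'n \<Rightarrow> ereal" where
  "econj f u = (SUP y. ereal (u \<bullet> y) - f y)"

text \<open>Bregman divergence D_f(y,x), with g = grad f(x).\<close>
definition bregman :: "(real^'n \<Rightarrow> ereal) \<Rightarrow> real^'n \<Rightarrow> real^'n \<Rightarrow> real^'n \<Rightarrow> ereal" where
  "bregman f g y x = f y - f x - ereal (g \<bullet> (y - x))"

definition gap :: "(real^'n \<Rightarrow> ereal) \<Rightarrow> (real^'n) set \<Rightarrow> real^'n \<Rightarrow> real^'n \<Rightarrow> ereal" where
  "gap f C x u = f x + ind C x + econj f u + econj (ind C) (- u)"

text \<open>The quantity D(x,s,theta) with Psi = ind C, g = grad f(x).\<close>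
definition Dfun :: "(real^'n \<Rightarrow> ereal) \<Rightarrow> (real^'n) set \<Rightarrow> real^'n \<Rightarrow> real^'n \<Rightarrow> real^'n \<Rightarrow> real \<Rightarrow> ereal" where
  "Dfun f C g x s \<theta> = bregman f g (x + \<theta> *\<^sub>R (s - x)) x + ind C (x + \<theta> *\<^sub>R (s - x))
      - ereal (1 - \<theta>) * ind C x - ereal \<theta> * ind C s"

definition subopt :: "(real^'n \<Rightarrow> ereal) \<Rightarrow> (real^'n) set \<Rightarrow> real^'n \<Rightarrow> ereal" where
  "subopt f C x = f x + ind C x - (INF y. f y + ind C y)"

definition weak_growth :: "(real^'n \<Rightarrow> ereal) \<Rightarrow> (real^'n) set \<Rightarrow> real \<Rightarrow> real \<Rightarrow> real \<Rightarrow> bool" where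
  "weak_growth f C q r M \<longleftrightarrow> 0 < M \<and>
     (\<forall>x\<in>C. \<forall>g. is_grad f x g \<longrightarrow>
        (\<forall>s. (s \<in> C \<and> (\<forall>y\<in>C. g \<bullet> s \<le> g \<bullet> y)) \<longrightarrow>
          (\<forall>\<theta>\<in>{0..1}.
             Dfun f C g x s \<theta> * ereal (rpow (real_of_ereal (subopt f C x)) (1 - r))
               \<le> ereal (M * \<theta> powr q / q) * gap f C x g)))"

definition unif_smooth_on :: "(real^'n \<Rightarrow> real) \<Rightarrow> (real^'n \<Rightarrow> ereal) \<Rightarrow> (real^'n) set \<Rightarrow> real \<Rightarrow> real \<Rightarrow> bool" where
  "unif_smooth_on N f C q L \<longleftrightarrow> (\<forall>x\<in>C. \<forall>y\<in>C. \<forall>\<theta>\<in>{0..1}.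
      ereal (1 - \<theta>) * f x + ereal \<theta> * f y - ereal (L / q * \<theta> * (1 - \<theta>) * N (y - x) powr q)
        \<le> f (x + \<theta> *\<^sub>R (y - x)))"

definition unif_convex_set :: "(real^'n \<Rightarrow> real) \<Rightarrow> (real^'n) set \<Rightarrow> real \<Rightarrow> real \<Rightarrow> bool" where
  "unif_convex_set N C p \<mu> \<longleftrightarrow> (\<forall>x\<in>C. \<forall>y\<in>C. \<forall>\<theta>\<in>{0..1}. \<forall>z. N z \<le> 1 \<longrightarrow>
      x + \<theta> *\<^sub>R (y - x) + (\<mu> / p * \<theta> * (1 - \<theta>) * N (y - x) powr p) *\<^sub>R z \<in> C)"

definition holder_error_bound :: "(real^'n \<Rightarrow> real) \<Rightarrow> (real^'n \<Rightarrow> ereal) \<Rightarrow> (real^'n) set \<Rightarrow> real \<Rightarrow> real \<Rightarrow> real \<Rightarrow> bool" where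
  "holder_error_bound N f C fstar \<gamma> K \<longleftrightarrow> (\<forall>x\<in>C.
      Inf {N (x - y) | y. y \<in> C \<and> f y = ereal fstar} \<le> K * rpow (real_of_ereal (f x) - fstar) \<gamma>)"

end

theory Submission
  imports Defs
begin

text \<open>Write \<open>G = \<langle>g, x - s\<rangle>\<close> for the Frank-Wolfe gap at \<open>x\<close>. Since \<open>C\<close> is uniformly convex, points
  near the middle of \<open>[x, s]\<close> can be pushed in any unit direction without leaving \<open>C\<close>, and as \<open>s\<close>
  minimizes \<open>\<langle>g, \<cdot>\<rangle>\<close> over \<open>C\<close> this yields \<open>\<mu>/p \<parallel>s - x\<parallel>\<^sup>p (f x - f\<^sup>\<star>) \<le> G dist(x, X\<^sup>\<star>)\<close>.
  The error bound turns the right-hand side into \<open>G K (f x - f\<^sup>\<star>)\<^sup>\<gamma>\<close>, which controls \<open>\<parallel>s - x\<parallel>\<^sup>q\<close>;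
  smoothness bounds \<open>D(x, s, \<theta>)\<close> by \<open>L/q \<theta>\<^sup>q \<parallel>s - x\<parallel>\<^sup>q\<close>, and convexity gives \<open>f x - f\<^sup>\<star> \<le> G\<close>.

  At a minimizer \<open>x\<close> the subopt factor vanishes, except when \<open>r = 1\<close> (that is \<open>p = q = 2\<close>, \<open>\<gamma> = 1\<close>)
  where it is \<open>0\<^sup>0 = 1\<close>. Then a linear error bound together with quadratic smoothness and
  2-uniform convexity prevents \<open>f\<close> from leaving its minimum anywhere along \<open>[x, s]\<close>, so \<open>D \<le> 0\<close>.\<close>

lemma is_norm_nonneg: "is_norm N \<Longrightarrow> 0 \<le> N z"
  unfolding is_norm_def by blast

lemma is_norm_eq_0_iff: "is_norm N \<Longrightarrow> N z = 0 \<longleftrightarrow> z = 0"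
  unfolding is_norm_def by blast

lemma is_norm_scaleR: "is_norm N \<Longrightarrow> N (c *\<^sub>R z) = \<bar>c\<bar> * N z"
  unfolding is_norm_def by blast

lemma is_norm_minus_commute: "is_norm N \<Longrightarrow> N (x - y) = N (y - x)"
  using is_norm_scaleR[of N "-1" "y - x"] by simp

lemma is_norm_pos: "is_norm N \<Longrightarrow> z \<noteq> 0 \<Longrightarrow> 0 < N z"
  using is_norm_nonneg[of N z] is_norm_eq_0_iff[of N z] by simp

lemma is_norm_normalize: "is_norm N \<Longrightarrow> z \<noteq> 0 \<Longrightarrow> N ((1 / N z) *\<^sub>R z) = 1"
  using is_norm_scaleR[of N "1 / N z" z] is_norm_pos[of N z] by simp

lemma convex_segment_point:
  "convex C \<Longrightarrow> x \<in> C \<Longrightarrow> s \<in> C \<Longrightarrow> 0 \<le> \<tau> \<Longrightarrow> \<tau> \<le> 1 \<Longrightarrow> x + \<tau> *\<^sub>R (s - x) \<in> C"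
  using convexD_alt[of C x s \<tau>] by (simp add: algebra_simps)

lemma rpow_pos: "0 < a \<Longrightarrow> rpow a e = a powr e"
  unfolding rpow_def by simp

lemma DERIV_ge_of_right_quotient_bound:
  fixes \<phi> :: "real \<Rightarrow> real"
  assumes "(\<phi> has_real_derivative D) (at t)" "0 < e"
    and "\<And>\<tau>. 0 < \<tau> \<Longrightarrow> \<tau> \<le> e \<Longrightarrow> \<tau> * h \<tau> \<le> \<phi> (t + \<tau>) - \<phi> t"
    and "(h \<longlongrightarrow> c) (at_right 0)"
  shows "c \<le> D"
proof -
  have "((\<lambda>\<tau>. (\<phi> (t + \<tau>) - \<phi> t) / \<tau>) \<longlongrightarrow> D) (at 0)"
    using assms(1) unfolding DERIV_def .
  then have quotient: "((\<lambda>\<tau>. (\<phi> (t + \<tau>) - \<phi> t) / \<tau>) \<longlongrightarrow> D) (at_right 0)"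
    by (rule tendsto_mono[rotated]) (simp add: at_le)
  have "\<forall>\<^sub>F \<tau> in at_right 0. h \<tau> \<le> (\<phi> (t + \<tau>) - \<phi> t) / \<tau>"
    unfolding eventually_at_right_field
    using assms(2,3) by (intro exI[of _ e]) (auto simp: field_simps)
  then show ?thesis by (intro tendsto_le[OF _ quotient assms(4)]) simp_all
qed

lemma DERIV_le_of_right_quotient_bound:
  fixes \<phi> :: "real \<Rightarrow> real"
  assumes "(\<phi> has_real_derivative D) (at t)" "0 < e"
    and "\<And>\<tau>. 0 < \<tau> \<Longrightarrow> \<tau> \<le> e \<Longrightarrow> \<phi> (t + \<tau>) - \<phi> t \<le> \<tau> * h \<tau>"
    and "(h \<longlongrightarrow> c) (at_right 0)"
  shows "D \<le> c"
proof -
  have "-c \<le> -D"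
  proof (rule DERIV_ge_of_right_quotient_bound[OF DERIV_minus[OF assms(1)] assms(2)])
    show "((\<lambda>\<tau>. - h \<tau>) \<longlongrightarrow> - c) (at_right 0)" using assms(4) by (rule tendsto_minus)
  qed (use assms(3) in fastforce)
  then show ?thesis by simp
qed

lemma unit_interval_by_right_extension:
  fixes Z :: "real set"
  assumes "closed Z" "0 \<in> Z" "Z \<subseteq> {0..1}"
    and down: "\<And>t \<tau>. t \<in> Z \<Longrightarrow> 0 \<le> \<tau> \<Longrightarrow> \<tau> \<le> t \<Longrightarrow> \<tau> \<in> Z"
    and right: "\<And>t. t \<in> Z \<Longrightarrow> t < 1 \<Longrightarrow> \<exists>\<tau>>t. \<tau> \<in> Z"
  shows "Z = {0..1}"
proof -
  have bdd: "bdd_above Z" using assms(3) by (meson atLeastAtMost_iff bdd_aboveI subsetD)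
  have top: "Sup Z \<in> Z" using closed_contains_Sup[OF _ bdd assms(1)] assms(2) by blast
  have "Sup Z = 1"
  proof (rule ccontr)
    assume "Sup Z \<noteq> 1"
    then have "Sup Z < 1" using top assms(3) by fastforce
    then obtain \<tau> where "Sup Z < \<tau>" "\<tau> \<in> Z" using right[OF top] by blast
    then show False using cSup_upper[OF _ bdd] by fastforce
  qed
  then have "{0..1} \<subseteq> Z" using top down by auto
  then show ?thesis using assms(3) by blast
qed

lemma linear_le_quadratic_near_zero:
  fixes a B \<delta>0 :: real
  assumes "0 < a" "0 < \<delta>0" and bound: "\<And>\<delta>. 0 < \<delta> \<Longrightarrow> \<delta> \<le> \<delta>0 \<Longrightarrow> a * \<delta> \<le> B * \<delta>\<^sup>2"
  shows False
proof -
  have "0 < B * \<delta>0\<^sup>2" using bound[of \<delta>0] assms by (smt (verit) mult_pos_pos)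
  then have "0 < B" by (simp add: zero_less_mult_iff)
  define \<delta> where "\<delta> = min \<delta>0 (a / (2 * B))"
  have \<delta>: "0 < \<delta>" "\<delta> \<le> \<delta>0" "\<delta> \<le> a / (2 * B)"
    using assms \<open>0 < B\<close> by (auto simp: \<delta>_def)
  have "a * \<delta> \<le> (B * \<delta>) * \<delta>" using bound[OF \<delta>(1,2)] by (simp add: power2_eq_square)
  also have "\<dots> \<le> (a / 2) * \<delta>"
    using \<delta> \<open>0 < B\<close> by (intro mult_right_mono) (auto simp: field_simps)
  finally show False using \<open>0 < a\<close> \<delta>(1) by simp
qed

lemma is_grad_finite: "is_grad f x g \<Longrightarrow> f x = ereal (real_of_ereal (f x))"
  unfolding is_grad_def by (metis (mono_tags, lifting) eventually_nhds_x_imp_x ereal_real)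

lemma differentiable_on_set_finite:
  "differentiable_on_set f C \<Longrightarrow> y \<in> C \<Longrightarrow> f y = ereal (real_of_ereal (f y))"
  unfolding differentiable_on_set_def using is_grad_finite by blast

lemma is_grad_line_DERIV:
  assumes "is_grad f (x + t *\<^sub>R v) g"
  shows "((\<lambda>\<tau>. real_of_ereal (f (x + \<tau> *\<^sub>R v))) has_real_derivative (g \<bullet> v)) (at t)"
proof -
  have "((\<lambda>y. real_of_ereal (f y)) has_derivative (\<lambda>h. g \<bullet> h)) (at (x + t *\<^sub>R v))"
    using assms unfolding is_grad_def by blast
  moreover have "((\<lambda>\<tau>. x + \<tau> *\<^sub>R v) has_derivative (\<lambda>\<tau>. \<tau> *\<^sub>R v)) (at t)"
    by (auto intro!: derivative_eq_intros)
  ultimately have "((\<lambda>\<tau>. real_of_ereal (f (x + \<tau> *\<^sub>R v))) has_derivative (\<lambda>\<tau>. g \<bullet> (\<tau> *\<^sub>R v))) (at t)"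
    using diff_chain_at by (fastforce simp: o_def)
  then show ?thesis
    unfolding has_field_derivative_def by (simp add: mult.commute[of _ "g \<bullet> v"])
qed

lemma closed_proper_convex_not_MInfty: "closed_proper_convex f \<Longrightarrow> f x \<noteq> -\<infinity>"
  unfolding closed_proper_convex_def by blast

lemma closed_proper_convex_segment_le:
  assumes f: "closed_proper_convex f" and "f y1 = ereal a1" "f y2 = ereal a2"
    and "0 \<le> l" "l \<le> 1"
  shows "f (y1 + l *\<^sub>R (y2 - y1)) \<le> ereal ((1 - l) * a1 + l * a2)"
proof -
  let ?E = "{(x, t::real). f x \<le> ereal t}"
  have "convex ?E" using f unfolding closed_proper_convex_def by blast
  moreover have "(y1, a1) \<in> ?E" "(y2, a2) \<in> ?E" using assms by auto
  ultimately have "(1 - l) *\<^sub>R (y1, a1) + l *\<^sub>R (y2, a2) \<in> ?E"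
    using assms by (intro convexD) auto
  moreover have "y1 + l *\<^sub>R (y2 - y1) = (1 - l) *\<^sub>R y1 + l *\<^sub>R y2"
    by (simp add: algebra_simps)
  ultimately show ?thesis by simp
qed

lemma closed_proper_convex_grad_le:
  assumes f: "closed_proper_convex f" and g: "is_grad f x g" and y: "f y = ereal b"
  shows "real_of_ereal (f x) + g \<bullet> (y - x) \<le> b"
proof -
  let ?F = "\<lambda>z. real_of_ereal (f z)"
  have fx: "f x = ereal (?F x)" using is_grad_finite[OF g] .
  have "((\<lambda>\<tau>. ?F (x + \<tau> *\<^sub>R (y - x))) has_real_derivative (g \<bullet> (y - x))) (at 0)"
    using is_grad_line_DERIV[of f x 0 "y - x" g] g by simp
  then have "g \<bullet> (y - x) \<le> b - ?F x"
  proof (rule DERIV_le_of_right_quotient_bound[OF _ zero_less_one])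
    fix \<tau> :: real assume \<tau>: "0 < \<tau>" "\<tau> \<le> 1"
    have "f (x + \<tau> *\<^sub>R (y - x)) \<le> ereal ((1 - \<tau>) * ?F x + \<tau> * b)"
      using closed_proper_convex_segment_le[OF f fx y, of \<tau>] \<tau> by simp
    then have "?F (x + \<tau> *\<^sub>R (y - x)) \<le> (1 - \<tau>) * ?F x + \<tau> * b"
      using closed_proper_convex_not_MInfty[OF f] by (cases "f (x + \<tau> *\<^sub>R (y - x))") auto
    then show "?F (x + (0 + \<tau>) *\<^sub>R (y - x)) - ?F (x + 0 *\<^sub>R (y - x)) \<le> \<tau> * (b - ?F x)"
      by (simp add: algebra_simps)
  qed simp
  then show ?thesis by simp
qed

lemma grad_nonneg_at_minimizer:
  assumes fdiff: "differentiable_on_set f C" and C: "convex C"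
    and fstar_min: "\<forall>z\<in>C. ereal fstar \<le> f z"
    and x: "x \<in> C" "f x = ereal fstar" and g: "is_grad f x g" and y: "y \<in> C"
  shows "0 \<le> g \<bullet> (y - x)"
proof -
  let ?F = "\<lambda>z. real_of_ereal (f z)"
  have "((\<lambda>\<tau>. ?F (x + \<tau> *\<^sub>R (y - x))) has_real_derivative g \<bullet> (y - x)) (at 0)"
    using is_grad_line_DERIV[of f x 0 "y - x" g] g by simp
  then show ?thesis
  proof (rule DERIV_ge_of_right_quotient_bound[OF _ zero_less_one, where h = "\<lambda>_. 0"])
    fix \<tau> :: real assume "0 < \<tau>" "\<tau> \<le> 1"
    then have inC: "x + \<tau> *\<^sub>R (y - x) \<in> C" using convex_segment_point[OF C x(1) y] by simp
    then have "fstar \<le> ?F (x + \<tau> *\<^sub>R (y - x))"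
      using fstar_min differentiable_on_set_finite[OF fdiff inC] by (metis ereal_less_eq(3))
    then show "\<tau> * 0 \<le> ?F (x + (0 + \<tau>) *\<^sub>R (y - x)) - ?F (x + 0 *\<^sub>R (y - x))"
      using x(2) by simp
  qed simp
qed

lemma unif_smooth_on_bregman_le:
  assumes C: "convex C" and fdiff: "differentiable_on_set f C" and fsm: "unif_smooth_on N f C q L"
    and x: "x \<in> C" and y: "y \<in> C" and g: "is_grad f x g"
  shows "real_of_ereal (f y) - real_of_ereal (f x) - g \<bullet> (y - x) \<le> L / q * N (y - x) powr q"
proof -
  let ?F = "\<lambda>z. real_of_ereal (f z)"
  define c where "c = L / q * N (y - x) powr q"
  have D: "((\<lambda>\<tau>. ?F (x + \<tau> *\<^sub>R (y - x))) has_real_derivative (g \<bullet> (y - x))) (at 0)"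
    using is_grad_line_DERIV[of f x 0 "y - x" g] g by simp
  have lim: "((\<lambda>\<tau>. ?F y - ?F x - (1 - \<tau>) * c) \<longlongrightarrow> ?F y - ?F x - (1 - 0) * c) (at_right 0)"
    by (intro tendsto_intros)
  have "?F y - ?F x - (1 - 0) * c \<le> g \<bullet> (y - x)"
  proof (rule DERIV_ge_of_right_quotient_bound[OF D zero_less_one _ lim])
    fix \<tau> :: real assume \<tau>: "0 < \<tau>" "\<tau> \<le> 1"
    have inC: "x + \<tau> *\<^sub>R (y - x) \<in> C" using convex_segment_point[OF C x y] \<tau> by simp
    have "ereal (1 - \<tau>) * f x + ereal \<tau> * f y - ereal (L / q * \<tau> * (1 - \<tau>) * N (y - x) powr q)
        \<le> f (x + \<tau> *\<^sub>R (y - x))"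
      using fsm x y \<tau> unfolding unif_smooth_on_def by auto
    moreover have "L / q * \<tau> * (1 - \<tau>) * N (y - x) powr q = \<tau> * (1 - \<tau>) * c"
      unfolding c_def by simp
    ultimately have "ereal (1 - \<tau>) * f x + ereal \<tau> * f y - ereal (\<tau> * (1 - \<tau>) * c)
        \<le> f (x + \<tau> *\<^sub>R (y - x))"
      by simp
    moreover obtain a1 a2 a3 where "f x = ereal a1" "f y = ereal a2" "f (x + \<tau> *\<^sub>R (y - x)) = ereal a3"
      using differentiable_on_set_finite[OF fdiff] x y inC by blast
    ultimately have "(1 - \<tau>) * ?F x + \<tau> * ?F y - \<tau> * (1 - \<tau>) * c \<le> ?F (x + \<tau> *\<^sub>R (y - x))"
      by simp
    then show "\<tau> * (?F y - ?F x - (1 - \<tau>) * c) \<le> ?F (x + (0 + \<tau>) *\<^sub>R (y - x)) - ?F (x + 0 *\<^sub>R (y - x))"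
      by (simp add: algebra_simps)
  qed
  then show ?thesis unfolding c_def by simp
qed

lemma unif_smooth_on_segment_le:
  assumes norm: "is_norm N" and C: "convex C" and fdiff: "differentiable_on_set f C"
    and fsm: "unif_smooth_on N f C q L" and x: "x \<in> C" and s: "s \<in> C"
    and t: "0 \<le> t" "t \<le> \<tau>" "\<tau> \<le> 1" and g: "is_grad f (x + t *\<^sub>R (s - x)) g"
  shows "real_of_ereal (f (x + \<tau> *\<^sub>R (s - x))) - real_of_ereal (f (x + t *\<^sub>R (s - x)))
    - (\<tau> - t) * (g \<bullet> (s - x)) \<le> L / q * ((\<tau> - t) * N (s - x)) powr q"
proof -
  have inC: "x + t *\<^sub>R (s - x) \<in> C" "x + \<tau> *\<^sub>R (s - x) \<in> C"
    using convex_segment_point[OF C x s] t by auto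
  have "x + \<tau> *\<^sub>R (s - x) - (x + t *\<^sub>R (s - x)) = (\<tau> - t) *\<^sub>R (s - x)" by (simp add: algebra_simps)
  moreover have "N ((\<tau> - t) *\<^sub>R (s - x)) = (\<tau> - t) * N (s - x)" using is_norm_scaleR[OF norm] t by simp
  ultimately show ?thesis using unif_smooth_on_bregman_le[OF C fdiff fsm inC g] by simp
qed

lemma unif_convex_set_linear_gap:
  assumes Cuc: "unif_convex_set N C p \<mu>" and x: "x \<in> C" and s: "s \<in> C"
    and smin: "\<forall>y\<in>C. g \<bullet> s \<le> g \<bullet> y" and w: "N w \<le> 1"
  shows "\<mu> / p * N (s - x) powr p * (- (g \<bullet> w)) \<le> g \<bullet> (x - s)"
proof (rule field_le_mult_one_interval)
  fix t :: real assume t: "0 < t" "t < 1"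
  define c where "c = \<mu> / p * N (s - x) powr p"
  have "x + t *\<^sub>R (s - x) + (\<mu> / p * t * (1 - t) * N (s - x) powr p) *\<^sub>R w \<in> C"
    using Cuc x s t w unfolding unif_convex_set_def by auto
  moreover have "\<mu> / p * t * (1 - t) * N (s - x) powr p = c * t * (1 - t)" unfolding c_def by simp
  ultimately have "g \<bullet> s \<le> g \<bullet> (x + t *\<^sub>R (s - x) + (c * t * (1 - t)) *\<^sub>R w)"
    using smin by metis
  then have "(1 - t) * (t * (c * (- (g \<bullet> w)))) \<le> (1 - t) * (g \<bullet> (x - s))"
    by (simp add: algebra_simps inner_add_right inner_diff_right)
  from mult_left_le_imp_le[OF this] t show "t * (c * (- (g \<bullet> w))) \<le> g \<bullet> (x - s)"
    by simp
qed

lemma unif_convex_set_ball: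
  assumes norm: "is_norm N" and Cuc: "unif_convex_set N C p \<mu>" and x: "x \<in> C" and s: "s \<in> C"
    and \<tau>: "0 \<le> \<tau>" "\<tau> \<le> 1" and \<rho>: "0 \<le> \<rho>" "\<rho> \<le> \<mu> / p * \<tau> * (1 - \<tau>) * N (s - x) powr p"
    and u: "N u \<le> 1"
  shows "x + \<tau> *\<^sub>R (s - x) + \<rho> *\<^sub>R u \<in> C"
proof -
  define r where "r = \<mu> / p * \<tau> * (1 - \<tau>) * N (s - x) powr p"
  have "\<rho> \<le> r" using \<rho> unfolding r_def by simp
  have "N ((\<rho> / r) *\<^sub>R u) \<le> 1"
  proof (cases "\<rho> = 0")
    case False
    then have "0 < r" using \<rho> unfolding r_def by linarith
    then have "N ((\<rho> / r) *\<^sub>R u) = \<rho> / r * N u" using is_norm_scaleR[OF norm] \<rho> by simp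
    also have "\<dots> \<le> 1 * 1"
      using \<open>0 < r\<close> \<open>\<rho> \<le> r\<close> \<rho> u is_norm_nonneg[OF norm, of u] by (intro mult_mono) auto
    finally show ?thesis by simp
  qed (use is_norm_scaleR[OF norm, of 0] in simp)
  moreover have "\<forall>z. N z \<le> 1 \<longrightarrow> x + \<tau> *\<^sub>R (s - x) + r *\<^sub>R z \<in> C"
    using Cuc x s \<tau> unfolding unif_convex_set_def r_def by auto
  ultimately have "x + \<tau> *\<^sub>R (s - x) + r *\<^sub>R ((\<rho> / r) *\<^sub>R u) \<in> C" by blast
  moreover have "r *\<^sub>R ((\<rho> / r) *\<^sub>R u) = \<rho> *\<^sub>R u" if "\<rho> \<noteq> 0"
    using that \<open>\<rho> \<le> r\<close> \<rho>(1) by simp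
  ultimately show ?thesis
    using convex_segment_point by (cases "\<rho> = 0") auto
qed

lemma le_mult_cInf:
  fixes A G :: real and S :: "real set"
  assumes "S \<noteq> {}" "0 \<le> G" and "\<And>v. v \<in> S \<Longrightarrow> A \<le> G * v"
  shows "A \<le> G * Inf S"
proof (cases "G = 0")
  case True
  then show ?thesis using assms by fastforce
next
  case False
  then have "A / G \<le> Inf S" using assms by (intro cInf_greatest) (auto simp: field_simps)
  then show ?thesis using False assms(2) by (simp add: field_simps)
qed

lemma unif_convex_set_subopt_le:
  assumes norm: "is_norm N" and f: "closed_proper_convex f"
    and Cuc: "unif_convex_set N C p \<mu>" and "0 \<le> \<mu>" "0 < p"
    and x: "x \<in> C" and g: "is_grad f x g" and s: "s \<in> C" and smin: "\<forall>y\<in>C. g \<bullet> s \<le> g \<bullet> y"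
    and v: "v \<in> C" "f v = ereal b"
  shows "\<mu> / p * N (s - x) powr p * (real_of_ereal (f x) - b) \<le> g \<bullet> (x - s) * N (x - v)"
proof (cases "v = x")
  case True
  then show ?thesis using v is_norm_eq_0_iff[OF norm, of 0] by simp
next
  case False
  define e where "e = N (x - v)"
  have "0 < e" unfolding e_def using is_norm_pos[OF norm] False by simp
  define c where "c = \<mu> / p * N (s - x) powr p"
  have "0 \<le> c" unfolding c_def using assms(4,5) by simp
  define w where "w = (1 / e) *\<^sub>R (v - x)"
  have "N w = 1"
    unfolding w_def e_def is_norm_minus_commute[OF norm, of x] using is_norm_normalize[OF norm] False
    by simp
  then have "c * (- (g \<bullet> w)) \<le> g \<bullet> (x - s)"
    using unif_convex_set_linear_gap[OF Cuc x s smin] unfolding c_def by simp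
  moreover have "- (g \<bullet> w) = g \<bullet> (x - v) / e"
    unfolding w_def by (simp add: inner_diff_right diff_divide_distrib)
  moreover have "real_of_ereal (f x) - b \<le> g \<bullet> (x - v)"
    using closed_proper_convex_grad_le[OF f g v(2)] by (simp add: inner_diff_right)
  ultimately have "c * ((real_of_ereal (f x) - b) / e) \<le> g \<bullet> (x - s)"
    using \<open>0 \<le> c\<close> \<open>0 < e\<close> by (smt (verit) divide_right_mono mult_left_mono)
  then have "c * (real_of_ereal (f x) - b) \<le> g \<bullet> (x - s) * e"
    using pos_divide_le_eq[OF \<open>0 < e\<close>] by (simp add: mult_ac)
  then show ?thesis unfolding c_def e_def .
qed

lemma holder_error_bound_unif_convex:
  assumes norm: "is_norm N" and f: "closed_proper_convex f"
    and Cuc: "unif_convex_set N C p \<mu>" and "0 \<le> \<mu>" "0 < p"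
    and eb: "holder_error_bound N f C fstar \<gamma> K" and Xstar_ne: "{x \<in> C. f x = ereal fstar} \<noteq> {}"
    and x: "x \<in> C" and g: "is_grad f x g" and s: "s \<in> C" and smin: "\<forall>y\<in>C. g \<bullet> s \<le> g \<bullet> y"
  shows "\<mu> / p * N (s - x) powr p * (real_of_ereal (f x) - fstar)
    \<le> g \<bullet> (x - s) * (K * rpow (real_of_ereal (f x) - fstar) \<gamma>)"
proof -
  define S where "S = {N (x - v) | v. v \<in> C \<and> f v = ereal fstar}"
  have "\<mu> / p * N (s - x) powr p * (real_of_ereal (f x) - fstar) \<le> g \<bullet> (x - s) * Inf S"
  proof (rule le_mult_cInf)
    show "S \<noteq> {}" using Xstar_ne unfolding S_def by blast
    show "0 \<le> g \<bullet> (x - s)" using smin x by (simp add: inner_diff_right)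
  qed (use unif_convex_set_subopt_le[OF norm f Cuc assms(4,5) x g s smin] in \<open>auto simp: S_def\<close>)
  also have "\<dots> \<le> g \<bullet> (x - s) * (K * rpow (real_of_ereal (f x) - fstar) \<gamma>)"
    using eb x smin unfolding holder_error_bound_def S_def
    by (intro mult_left_mono) (auto simp: inner_diff_right)
  finally show ?thesis .
qed

lemma holder_growth_inequality:
  fixes a G d p q \<gamma> \<mu> K L \<theta> D :: real
  assumes a: "0 < a" "a \<le> G" and d: "0 \<le> d" and p: "2 \<le> p" and q: "1 < q" "q \<le> 2"
    and \<mu>: "0 < \<mu>" and K: "0 < K" and L: "0 < L"
    and H: "\<mu> / p * d powr p * a \<le> G * (K * a powr \<gamma>)"
    and \<theta>: "0 \<le> \<theta>" and D: "D \<le> L / q * (\<theta> * d) powr q"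
  shows "D * a powr (1 - \<gamma> * q / p) \<le> L * (p * K / \<mu>) powr (q / p) * \<theta> powr q / q * G"
proof -
  define R where "R = p * K / \<mu>"
  have R: "0 < R" using p K \<mu> unfolding R_def by auto
  have G: "0 < G" using a by simp
  have "d powr p * a \<le> R * G * a powr \<gamma>"
    using H p \<mu> unfolding R_def by (simp add: field_simps)
  also have "a powr \<gamma> = a powr (\<gamma> - 1) * a" using a by (simp add: powr_diff)
  finally have "d powr p * a \<le> (R * G * a powr (\<gamma> - 1)) * a" by (simp add: mult.assoc)
  then have dp: "d powr p \<le> R * G * a powr (\<gamma> - 1)" using a by simp
  have "d powr q = (d powr p) powr (q / p)" using p by (simp add: powr_powr)
  also have "\<dots> \<le> (R * G * a powr (\<gamma> - 1)) powr (q / p)"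
    by (rule powr_mono2) (use dp p q in auto)
  also have "\<dots> = R powr (q / p) * G powr (q / p) * a powr ((\<gamma> - 1) * (q / p))"
    using R G a by (simp add: powr_mult powr_powr)
  finally have dq: "d powr q \<le> R powr (q / p) * G powr (q / p) * a powr ((\<gamma> - 1) * (q / p))" .
  define A where "A = a powr (1 - \<gamma> * q / p)"
  have "D * A \<le> L / q * (\<theta> * d) powr q * A" using D unfolding A_def by (rule mult_right_mono) simp
  also have "(\<theta> * d) powr q = \<theta> powr q * d powr q" using \<theta> d by (simp add: powr_mult)
  also have "L / q * (\<theta> powr q * d powr q) * A
      \<le> L / q * (\<theta> powr q * (R powr (q / p) * G powr (q / p) * a powr ((\<gamma> - 1) * (q / p)))) * A"
    using dq L q unfolding A_def by (intro mult_right_mono mult_left_mono) auto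
  also have "a powr ((\<gamma> - 1) * (q / p)) * A = a powr (1 - q / p)"
    unfolding A_def using a p by (simp add: powr_add[symmetric] field_simps)
  then have "L / q * (\<theta> powr q * (R powr (q / p) * G powr (q / p) * a powr ((\<gamma> - 1) * (q / p)))) * A
      = L / q * \<theta> powr q * R powr (q / p) * G powr (q / p) * a powr (1 - q / p)"
    by (simp add: mult.assoc mult.left_commute)
  also have "\<dots> \<le> L / q * \<theta> powr q * R powr (q / p) * G powr (q / p) * G powr (1 - q / p)"
    using L q a p by (intro mult_left_mono powr_mono2) (auto simp: field_simps)
  also have "G powr (q / p) * G powr (1 - q / p) = G" using G by (simp add: powr_add[symmetric])
  then have "L / q * \<theta> powr q * R powr (q / p) * G powr (q / p) * G powr (1 - q / p)
      = L * R powr (q / p) * \<theta> powr q / q * G"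
    by (simp add: field_simps mult.assoc)
  finally show ?thesis unfolding A_def R_def .
qed

lemma linear_error_bound_steep_direction:
  assumes norm: "is_norm N" and f: "closed_proper_convex f"
    and K: "0 < K" and eb: "holder_error_bound N f C fstar 1 K"
    and Xstar_ne: "{x \<in> C. f x = ereal fstar} \<noteq> {}"
    and y: "y \<in> C" "f y = ereal b" "fstar < b" and g: "is_grad f y g"
  shows "\<exists>u. N u = 1 \<and> 1 / (2 * K) \<le> g \<bullet> u"
proof -
  define S where "S = {N (y - w) | w. w \<in> C \<and> f w = ereal fstar}"
  have "S \<noteq> {}" unfolding S_def using Xstar_ne by blast
  have "Inf S \<le> K * (b - fstar)" using eb y unfolding holder_error_bound_def S_def rpow_def by auto
  also have "\<dots> < 2 * K * (b - fstar)" using K y by simp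
  finally obtain w where w: "w \<in> C" "f w = ereal fstar" and close: "N (y - w) < 2 * K * (b - fstar)"
    using cInf_lessD[OF \<open>S \<noteq> {}\<close>] unfolding S_def by blast
  have "y \<noteq> w" using w y by auto
  then have e: "0 < N (y - w)" using is_norm_pos[OF norm] by simp
  define u where "u = (1 / N (y - w)) *\<^sub>R (y - w)"
  have "b - fstar \<le> g \<bullet> (y - w)"
    using closed_proper_convex_grad_le[OF f g w(2)] y by (simp add: inner_diff_right)
  then have "(b - fstar) / N (y - w) \<le> g \<bullet> u" unfolding u_def using e by (simp add: divide_right_mono)
  moreover have "1 / (2 * K) \<le> (b - fstar) / N (y - w)" using e close K by (simp add: field_simps)
  moreover have "N u = 1" unfolding u_def using is_norm_normalize[OF norm] \<open>y \<noteq> w\<close> by simp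
  ultimately show ?thesis by fastforce
qed

text \<open>Step from the centre of the ball by \<open>\<rho>\<close> against a steep direction: \<open>f\<close> drops at rate at least
  \<open>1/(2K)\<close>, loses at most \<open>L/2 \<rho>\<^sup>2\<close> to curvature, and cannot go below \<open>fstar\<close>.\<close>

lemma linear_error_bound_ball_growth:
  assumes norm: "is_norm N" and f: "closed_proper_convex f" and fdiff: "differentiable_on_set f C"
    and C: "convex C" and fsm: "unif_smooth_on N f C 2 L"
    and fstar_min: "\<forall>x\<in>C. ereal fstar \<le> f x"
    and K: "0 < K" and eb: "holder_error_bound N f C fstar 1 K"
    and Xstar_ne: "{x \<in> C. f x = ereal fstar} \<noteq> {}"
    and y: "y \<in> C" "f y = ereal b" "fstar < b"
    and \<rho>: "0 \<le> \<rho>" and ball: "\<And>u. N u \<le> 1 \<Longrightarrow> y + \<rho> *\<^sub>R u \<in> C"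
  shows "\<rho> / (2 * K) - L / 2 * \<rho>\<^sup>2 \<le> b - fstar"
proof -
  let ?F = "\<lambda>z. real_of_ereal (f z)"
  obtain g where g: "is_grad f y g" using fdiff y(1) unfolding differentiable_on_set_def by blast
  obtain u where u: "N u = 1" "1 / (2 * K) \<le> g \<bullet> u"
    using linear_error_bound_steep_direction[OF norm f K eb Xstar_ne y g] by blast
  define z where "z = y + \<rho> *\<^sub>R (- u)"
  have "N (- u) = 1" using is_norm_scaleR[OF norm, of "-1" u] u(1) by simp
  then have zC: "z \<in> C" unfolding z_def by (intro ball) simp
  have "?F z - ?F y - g \<bullet> (z - y) \<le> L / 2 * N (z - y) powr 2"
    using unif_smooth_on_bregman_le[OF C fdiff fsm y(1) zC g] by simp
  moreover have "N (z - y) = \<rho>" unfolding z_def using is_norm_scaleR[OF norm, of "- \<rho>" u] u(1) \<rho> by simp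
  moreover have "fstar \<le> ?F z"
    using fstar_min zC differentiable_on_set_finite[OF fdiff zC] by (metis ereal_less_eq(3))
  ultimately have "fstar \<le> b - \<rho> * (g \<bullet> u) + L / 2 * \<rho>\<^sup>2"
    using y(2) \<rho> by (simp add: z_def)
  moreover have "\<rho> * (1 / (2 * K)) \<le> \<rho> * (g \<bullet> u)" using u(2) \<rho> by (rule mult_left_mono)
  ultimately show ?thesis by simp
qed

lemma linear_error_bound_segment_growth:
  assumes norm: "is_norm N" and f: "closed_proper_convex f" and fdiff: "differentiable_on_set f C"
    and C: "convex C" and Cuc: "unif_convex_set N C 2 \<mu>" and fsm: "unif_smooth_on N f C 2 L"
    and fstar_min: "\<forall>x\<in>C. ereal fstar \<le> f x"
    and K: "0 < K" and eb: "holder_error_bound N f C fstar 1 K"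
    and Xstar_ne: "{x \<in> C. f x = ereal fstar} \<noteq> {}"
    and x: "x \<in> C" and s: "s \<in> C" and \<tau>: "0 \<le> \<tau>" "\<tau> \<le> 1"
    and y: "f (x + \<tau> *\<^sub>R (s - x)) = ereal b" "fstar < b"
    and \<rho>: "0 \<le> \<rho>" "\<rho> \<le> \<mu> / 2 * \<tau> * (1 - \<tau>) * N (s - x) powr 2"
  shows "\<rho> / (2 * K) - L / 2 * \<rho>\<^sup>2 \<le> b - fstar"
proof (rule linear_error_bound_ball_growth[OF norm f fdiff C fsm fstar_min K eb Xstar_ne _ y \<rho>(1)])
  show "x + \<tau> *\<^sub>R (s - x) \<in> C" using convex_segment_point[OF C x s \<tau>] .
  show "x + \<tau> *\<^sub>R (s - x) + \<rho> *\<^sub>R u \<in> C" if "N u \<le> 1" for u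
    using unif_convex_set_ball[OF norm Cuc x s \<tau> \<rho> that] by simp
qed

lemma mid_segment_product_ge:
  fixes t \<delta> :: real
  assumes "0 \<le> t" "0 < \<delta>" "\<delta> \<le> (1 - t) / 2"
  shows "\<delta> * ((1 - t) / 2) \<le> (t + \<delta>) * (1 - (t + \<delta>))"
  using assms by (intro mult_mono) auto

lemma linear_error_bound_right_extension:
  assumes norm: "is_norm N" and f: "closed_proper_convex f" and fdiff: "differentiable_on_set f C"
    and C: "convex C" and \<mu>: "0 < \<mu>" and Cuc: "unif_convex_set N C 2 \<mu>"
    and fsm: "unif_smooth_on N f C 2 L"
    and fstar_min: "\<forall>x\<in>C. ereal fstar \<le> f x"
    and K: "0 < K" and eb: "holder_error_bound N f C fstar 1 K"
    and Xstar_ne: "{x \<in> C. f x = ereal fstar} \<noteq> {}"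
    and x: "x \<in> C" and s: "s \<in> C" and t: "0 \<le> t" "t < 1"
    and min: "f (x + t *\<^sub>R (s - x)) = ereal fstar" and g: "is_grad f (x + t *\<^sub>R (s - x)) g"
    and descent: "g \<bullet> (s - x) \<le> 0"
  shows "\<exists>\<tau>>t. \<tau> \<le> 1 \<and> f (x + \<tau> *\<^sub>R (s - x)) = ereal fstar"
proof (rule ccontr)
  assume none: "\<not> ?thesis"
  let ?F = "\<lambda>z. real_of_ereal (f z)"
  define d where "d = N (s - x)"
  have "s \<noteq> x" using none min t by fastforce
  then have "0 < d" unfolding d_def using is_norm_pos[OF norm] by simp
  have above: "fstar < ?F (x + \<tau> *\<^sub>R (s - x))" if "t < \<tau>" "\<tau> \<le> 1" for \<tau>
  proof -
    have inC: "x + \<tau> *\<^sub>R (s - x) \<in> C" using convex_segment_point[OF C x s] that t by simp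
    then have "ereal fstar \<le> f (x + \<tau> *\<^sub>R (s - x))" using fstar_min by blast
    moreover have "f (x + \<tau> *\<^sub>R (s - x)) \<noteq> ereal fstar" using none that by blast
    ultimately show ?thesis using differentiable_on_set_finite[OF fdiff inC] by (metis ereal_less_eq(3) order_le_neq_trans)
  qed
  have upper: "?F (x + \<tau> *\<^sub>R (s - x)) - fstar \<le> L / 2 * d\<^sup>2 * (\<tau> - t)\<^sup>2" if "t \<le> \<tau>" "\<tau> \<le> 1" for \<tau>
  proof -
    have "(\<tau> - t) * (g \<bullet> (s - x)) \<le> 0" using descent that by (simp add: mult_nonneg_nonpos)
    moreover have "0 \<le> (\<tau> - t) * d" using \<open>0 < d\<close> that by simp
    ultimately show ?thesis
      using unif_smooth_on_segment_le[OF norm C fdiff fsm x s t(1) that g] min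
      by (simp add: d_def power_mult_distrib mult_ac)
  qed
  define \<kappa> where "\<kappa> = \<mu> / 4 * (1 - t) * d\<^sup>2"
  have "0 < \<kappa>" unfolding \<kappa>_def using \<mu> t \<open>0 < d\<close> by simp
  have lower: "\<kappa> * \<delta> / (2 * K) - L / 2 * (\<kappa> * \<delta>)\<^sup>2 \<le> ?F (x + (t + \<delta>) *\<^sub>R (s - x)) - fstar"
    if \<delta>: "0 < \<delta>" "\<delta> \<le> (1 - t) / 2" for \<delta>
  proof (rule linear_error_bound_segment_growth[OF norm f fdiff C Cuc fsm fstar_min K eb Xstar_ne x s])
    show "0 \<le> t + \<delta>" "t + \<delta> \<le> 1" "0 \<le> \<kappa> * \<delta>" using \<delta> t \<open>0 < \<kappa>\<close> by auto
    show "f (x + (t + \<delta>) *\<^sub>R (s - x)) = ereal (?F (x + (t + \<delta>) *\<^sub>R (s - x)))"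
      "fstar < ?F (x + (t + \<delta>) *\<^sub>R (s - x))"
      using differentiable_on_set_finite[OF fdiff] convex_segment_point[OF C x s] above \<delta> t by auto
    have "\<kappa> * \<delta> = \<mu> / 2 * d\<^sup>2 * (\<delta> * ((1 - t) / 2))" unfolding \<kappa>_def by (simp add: field_simps)
    also have "\<dots> \<le> \<mu> / 2 * d\<^sup>2 * ((t + \<delta>) * (1 - (t + \<delta>)))"
      using mid_segment_product_ge[OF t(1) \<delta>] \<mu> by (intro mult_left_mono) auto
    finally show "\<kappa> * \<delta> \<le> \<mu> / 2 * (t + \<delta>) * (1 - (t + \<delta>)) * N (s - x) powr 2"
      using \<open>0 < d\<close> unfolding d_def by (simp add: mult_ac)
  qed
  show False
  proof (rule linear_le_quadratic_near_zero)
    show "0 < \<kappa> / (2 * K)" "0 < (1 - t) / 2" using \<open>0 < \<kappa>\<close> K t by auto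
    fix \<delta> :: real assume \<delta>: "0 < \<delta>" "\<delta> \<le> (1 - t) / 2"
    have "?F (x + (t + \<delta>) *\<^sub>R (s - x)) - fstar \<le> L / 2 * d\<^sup>2 * \<delta>\<^sup>2"
      using upper[of "t + \<delta>"] \<delta> by simp
    then have "\<kappa> * \<delta> / (2 * K) - L / 2 * (\<kappa> * \<delta>)\<^sup>2 \<le> L / 2 * d\<^sup>2 * \<delta>\<^sup>2"
      using lower[OF \<delta>] by linarith
    then show "\<kappa> / (2 * K) * \<delta> \<le> (L / 2 * \<kappa>\<^sup>2 + L / 2 * d\<^sup>2) * \<delta>\<^sup>2"
      by (simp add: power_mult_distrib algebra_simps)
  qed
qed

lemma differentiable_on_set_segment_continuous:
  assumes fdiff: "differentiable_on_set f C" and C: "convex C" and x: "x \<in> C" and s: "s \<in> C"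
  shows "continuous_on {0..1} (\<lambda>\<tau>. real_of_ereal (f (x + \<tau> *\<^sub>R (s - x))))"
proof (intro continuous_at_imp_continuous_on ballI)
  fix \<tau> :: real assume "\<tau> \<in> {0..1}"
  then have "x + \<tau> *\<^sub>R (s - x) \<in> C" using convex_segment_point[OF C x s] by simp
  then obtain g where "is_grad f (x + \<tau> *\<^sub>R (s - x)) g" using fdiff unfolding differentiable_on_set_def by blast
  then show "isCont (\<lambda>\<tau>. real_of_ereal (f (x + \<tau> *\<^sub>R (s - x)))) \<tau>"
    by (rule DERIV_isCont[OF is_grad_line_DERIV])
qed

lemma closed_proper_convex_min_segment:
  assumes f: "closed_proper_convex f" and fstar_min: "\<forall>z\<in>C. ereal fstar \<le> f z" and C: "convex C"
    and x: "x \<in> C" "f x = ereal fstar" and s: "s \<in> C"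
    and t: "t \<le> 1" "f (x + t *\<^sub>R (s - x)) = ereal fstar" and \<tau>: "0 \<le> \<tau>" "\<tau> \<le> t"
  shows "f (x + \<tau> *\<^sub>R (s - x)) = ereal fstar"
proof (rule antisym)
  show "ereal fstar \<le> f (x + \<tau> *\<^sub>R (s - x))"
    using fstar_min convex_segment_point[OF C x(1) s] \<tau> t by auto
  show "f (x + \<tau> *\<^sub>R (s - x)) \<le> ereal fstar"
  proof (cases "t = 0")
    case False
    have "f (x + (\<tau> / t) *\<^sub>R (x + t *\<^sub>R (s - x) - x)) \<le> ereal ((1 - \<tau> / t) * fstar + \<tau> / t * fstar)"
      using t \<tau> False by (intro closed_proper_convex_segment_le[OF f x(2)]) auto
    then show ?thesis using False by (simp add: algebra_simps)
  qed (use \<tau> x in simp)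
qed

lemma segment_minimizer_grad_descent:
  assumes fdiff: "differentiable_on_set f C" and C: "convex C"
    and fstar_min: "\<forall>z\<in>C. ereal fstar \<le> f z"
    and x: "x \<in> C" and g: "is_grad f x g" and s: "s \<in> C" and smin: "\<forall>y\<in>C. g \<bullet> s \<le> g \<bullet> y"
    and t: "0 \<le> t" "t \<le> 1" and min: "f (x + t *\<^sub>R (s - x)) = ereal fstar"
  obtains g' where "is_grad f (x + t *\<^sub>R (s - x)) g'" "g' \<bullet> (s - x) \<le> 0"
proof (cases "t = 0")
  case True
  then show ?thesis using that g smin x by (simp add: inner_diff_right)
next
  case False
  have z: "x + t *\<^sub>R (s - x) \<in> C" using convex_segment_point[OF C x s t] .
  then obtain g' where g': "is_grad f (x + t *\<^sub>R (s - x)) g'"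
    using fdiff unfolding differentiable_on_set_def by blast
  have "0 \<le> g' \<bullet> (x - (x + t *\<^sub>R (s - x)))"
    by (rule grad_nonneg_at_minimizer[OF fdiff C fstar_min z min g' x])
  then have "0 \<le> t * - (g' \<bullet> (s - x))" by (simp add: inner_diff_right algebra_simps)
  then show ?thesis using that[OF g'] False t by (simp add: mult_le_0_iff)
qed

lemma linear_error_bound_segment_min:
  assumes norm: "is_norm N" and f: "closed_proper_convex f" and fdiff: "differentiable_on_set f C"
    and C: "convex C" and \<mu>: "0 < \<mu>" and Cuc: "unif_convex_set N C 2 \<mu>"
    and fsm: "unif_smooth_on N f C 2 L"
    and fstar_min: "\<forall>x\<in>C. ereal fstar \<le> f x"
    and K: "0 < K" and eb: "holder_error_bound N f C fstar 1 K"
    and x: "x \<in> C" "f x = ereal fstar" and g: "is_grad f x g"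
    and s: "s \<in> C" and smin: "\<forall>y\<in>C. g \<bullet> s \<le> g \<bullet> y"
    and \<theta>: "0 \<le> \<theta>" "\<theta> \<le> 1"
  shows "f (x + \<theta> *\<^sub>R (s - x)) = ereal fstar"
proof -
  let ?F = "\<lambda>z. real_of_ereal (f z)"
  define pt where "pt \<tau> = x + \<tau> *\<^sub>R (s - x)" for \<tau>
  define Z where "Z = {\<tau> \<in> {0..1}. f (pt \<tau>) = ereal fstar}"
  have ptC: "pt \<tau> \<in> C" if "0 \<le> \<tau>" "\<tau> \<le> 1" for \<tau>
    unfolding pt_def using convex_segment_point[OF C x(1) s] that .
  have "f (pt \<tau>) = ereal fstar \<longleftrightarrow> ?F (pt \<tau>) = fstar" if \<tau>: "0 \<le> \<tau>" "\<tau> \<le> 1" for \<tau>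
  proof -
    obtain r where "f (pt \<tau>) = ereal r" using differentiable_on_set_finite[OF fdiff ptC[OF \<tau>]] by blast
    then show ?thesis by simp
  qed
  then have Z_real: "Z = {\<tau> \<in> {0..1}. ?F (pt \<tau>) = fstar}" unfolding Z_def by auto
  have "Z = {0..1}"
  proof (rule unit_interval_by_right_extension)
    have "continuous_on {0..1} (\<lambda>\<tau>. ?F (pt \<tau>))"
      unfolding pt_def by (rule differentiable_on_set_segment_continuous[OF fdiff C x(1) s])
    then show "closed Z" unfolding Z_real by (rule continuous_closed_preimage_constant) simp
    show "0 \<in> Z" "Z \<subseteq> {0..1}" using x unfolding Z_def pt_def by auto
  next
    fix t \<tau> assume "t \<in> Z" "0 \<le> \<tau>" "\<tau> \<le> t"
    then show "\<tau> \<in> Z"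
      using closed_proper_convex_min_segment[OF f fstar_min C x s] unfolding Z_def pt_def by auto
  next
    fix t assume t: "t \<in> Z" "t < 1"
    then have t0: "0 \<le> t" and min: "f (pt t) = ereal fstar" unfolding Z_def by auto
    obtain g' where "is_grad f (pt t) g'" "g' \<bullet> (s - x) \<le> 0"
      using segment_minimizer_grad_descent[OF fdiff C fstar_min x(1) g s smin t0 less_imp_le[OF t(2)]
          min[unfolded pt_def]]
      unfolding pt_def by blast
    then have "\<exists>\<tau>>t. \<tau> \<le> 1 \<and> f (x + \<tau> *\<^sub>R (s - x)) = ereal fstar"
      using linear_error_bound_right_extension[OF norm f fdiff C \<mu> Cuc fsm fstar_min K eb _
          x(1) s t0 t(2)] x min unfolding pt_def by blast
    then obtain \<tau> where "t < \<tau>" "\<tau> \<le> 1" "f (pt \<tau>) = ereal fstar" unfolding pt_def by blast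
    then show "\<exists>\<tau>>t. \<tau> \<in> Z" using t0 unfolding Z_def by auto
  qed
  then have "\<theta> \<in> Z" using \<theta> by simp
  then show ?thesis unfolding Z_def pt_def by simp
qed

lemma linear_error_bound_bregman_nonpos:
  assumes norm: "is_norm N" and f: "closed_proper_convex f" and fdiff: "differentiable_on_set f C"
    and C: "convex C" and \<mu>: "0 < \<mu>" and Cuc: "unif_convex_set N C 2 \<mu>"
    and fsm: "unif_smooth_on N f C 2 L"
    and fstar_min: "\<forall>x\<in>C. ereal fstar \<le> f x"
    and K: "0 < K" and eb: "holder_error_bound N f C fstar 1 K"
    and x: "x \<in> C" "f x = ereal fstar" and g: "is_grad f x g"
    and s: "s \<in> C" and smin: "\<forall>y\<in>C. g \<bullet> s \<le> g \<bullet> y"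
    and \<theta>: "0 \<le> \<theta>" "\<theta> \<le> 1"
  shows "real_of_ereal (f (x + \<theta> *\<^sub>R (s - x))) - real_of_ereal (f x) - \<theta> * (g \<bullet> (s - x)) \<le> 0"
proof -
  have "f (x + \<theta> *\<^sub>R (s - x)) = ereal fstar"
    by (rule linear_error_bound_segment_min[OF norm f fdiff C \<mu> Cuc fsm fstar_min K eb x g s smin \<theta>])
  moreover have "0 \<le> g \<bullet> (s - x)" by (rule grad_nonneg_at_minimizer[OF fdiff C fstar_min x g s])
  ultimately show ?thesis using x(2) \<theta> by simp
qed

lemma holder_exponent_eq_1:
  fixes p q \<gamma> :: real
  assumes "2 \<le> p" "q \<le> 2" "0 \<le> \<gamma>" "\<gamma> \<le> 1" "\<gamma> * q / p = 1"
  shows "p = 2" "q = 2" "\<gamma> = 1"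
proof -
  have pq: "\<gamma> * q = p" using assms by (simp add: field_simps)
  have "\<gamma> * q \<le> \<gamma> * 2" using assms by (intro mult_left_mono) auto
  then show "p = 2" "\<gamma> = 1" using pq assms by auto
  then show "q = 2" using pq by simp
qed

lemma weak_growth_above_min:
  assumes norm: "is_norm N" and f: "closed_proper_convex f" and fdiff: "differentiable_on_set f C"
    and C: "convex C" and p: "2 \<le> p" and \<mu>: "0 < \<mu>" and Cuc: "unif_convex_set N C p \<mu>"
    and q: "1 < q" "q \<le> 2" and L: "0 < L" and fsm: "unif_smooth_on N f C q L"
    and Xstar: "w \<in> C" "f w = ereal fstar" and K: "0 < K" and eb: "holder_error_bound N f C fstar \<gamma> K"
    and x: "x \<in> C" and g: "is_grad f x g" and s: "s \<in> C" and smin: "\<forall>y\<in>C. g \<bullet> s \<le> g \<bullet> y"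
    and \<theta>: "0 \<le> \<theta>" "\<theta> \<le> 1" and above: "fstar < real_of_ereal (f x)"
  shows "(real_of_ereal (f (x + \<theta> *\<^sub>R (s - x))) - real_of_ereal (f x) - \<theta> * (g \<bullet> (s - x)))
      * (real_of_ereal (f x) - fstar) powr (1 - \<gamma> * q / p)
    \<le> L * (p * K / \<mu>) powr (q / p) * \<theta> powr q / q * (g \<bullet> (x - s))"
proof (rule holder_growth_inequality[OF _ _ _ p q \<mu> K L _ \<theta>(1)])
  let ?F = "\<lambda>z. real_of_ereal (f z)"
  show "0 < ?F x - fstar" "0 \<le> N (s - x)" using above is_norm_nonneg[OF norm] by auto
  show "?F x - fstar \<le> g \<bullet> (x - s)"
    using closed_proper_convex_grad_le[OF f g Xstar(2)] bspec[OF smin Xstar(1)]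
    by (simp add: inner_diff_right)
  have "\<mu> / p * N (s - x) powr p * (?F x - fstar) \<le> g \<bullet> (x - s) * (K * rpow (?F x - fstar) \<gamma>)"
    using Xstar \<mu> p by (intro holder_error_bound_unif_convex[OF norm f Cuc _ _ eb _ x g s smin]) auto
  then show "\<mu> / p * N (s - x) powr p * (?F x - fstar) \<le> g \<bullet> (x - s) * (K * (?F x - fstar) powr \<gamma>)"
    using above by (simp add: rpow_pos)
  show "?F (x + \<theta> *\<^sub>R (s - x)) - ?F x - \<theta> * (g \<bullet> (s - x)) \<le> L / q * (\<theta> * N (s - x)) powr q"
    using unif_smooth_on_segment_le[OF norm C fdiff fsm x s, where t = 0 and \<tau> = \<theta>] g \<theta> by simp
qed

lemma weak_growth_real:
  assumes norm: "is_norm N" and f: "closed_proper_convex f" and fdiff: "differentiable_on_set f C"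
    and C: "convex C" and p: "2 \<le> p" and \<mu>: "0 < \<mu>" and Cuc: "unif_convex_set N C p \<mu>"
    and q: "1 < q" "q \<le> 2" and L: "0 < L" and fsm: "unif_smooth_on N f C q L"
    and fstar_min: "\<forall>x\<in>C. ereal fstar \<le> f x" and Xstar_ne: "{x \<in> C. f x = ereal fstar} \<noteq> {}"
    and \<gamma>: "0 \<le> \<gamma>" "\<gamma> \<le> 1" and K: "0 < K" and eb: "holder_error_bound N f C fstar \<gamma> K"
    and x: "x \<in> C" and g: "is_grad f x g" and s: "s \<in> C" and smin: "\<forall>y\<in>C. g \<bullet> s \<le> g \<bullet> y"
    and \<theta>: "0 \<le> \<theta>" "\<theta> \<le> 1"
  shows "(real_of_ereal (f (x + \<theta> *\<^sub>R (s - x))) - real_of_ereal (f x) - \<theta> * (g \<bullet> (s - x)))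
      * rpow (real_of_ereal (f x) - fstar) (1 - \<gamma> * q / p)
    \<le> L * (p * K / \<mu>) powr (q / p) * \<theta> powr q / q * (g \<bullet> (x - s))"
    (is "?D * rpow ?a ?e \<le> ?c * ?G")
proof (cases "fstar < real_of_ereal (f x)")
  case True
  obtain w where "w \<in> C" "f w = ereal fstar" using Xstar_ne by blast
  then show ?thesis
    using weak_growth_above_min[OF norm f fdiff C p \<mu> Cuc q L fsm _ _ K eb x g s smin \<theta>] True
    by (simp add: rpow_pos)
next
  case False
  have fx: "f x = ereal fstar"
    using fstar_min x differentiable_on_set_finite[OF fdiff x] False
    by (metis antisym ereal_less_eq(3) not_less)
  have "0 \<le> ?c * ?G" using L q smin x by (simp add: inner_diff_right)
  moreover have "?D * rpow ?a ?e \<le> 0"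
  proof (cases "\<gamma> * q / p = 1")
    case True
    \<comment> \<open>the subopt factor is \<open>rpow 0 0 = 1\<close>, so the Bregman term itself must be nonpositive\<close>
    note exps = holder_exponent_eq_1[OF p q(2) \<gamma> True]
    have "?D \<le> 0"
      using linear_error_bound_bregman_nonpos[OF norm f fdiff C \<mu> _ _ fstar_min K _ x(1) fx g s smin \<theta>]
        Cuc fsm eb unfolding exps by blast
    moreover have "?e = 0" using True by linarith
    then have "rpow ?a ?e = 1" unfolding rpow_def by (rule if_P)
    ultimately show ?thesis by simp
  next
    case False
    then have "?e \<noteq> 0" by linarith
    then have "rpow ?a ?e = 0" using fx unfolding rpow_def by simp
    then show ?thesis by simp
  qed
  ultimately show ?thesis by linarith
qed

lemma subopt_eq_real:
  assumes fstar_min: "\<forall>x\<in>C. ereal fstar \<le> f x" and Xstar_ne: "{x \<in> C. f x = ereal fstar} \<noteq> {}"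
    and x: "x \<in> C" "f x = ereal a"
  shows "subopt f C x = ereal (a - fstar)"
proof -
  have "(INF y. f y + ind C y) = ereal fstar"
  proof (rule antisym)
    obtain w where "w \<in> C" "f w = ereal fstar" using Xstar_ne by blast
    then show "(INF y. f y + ind C y) \<le> ereal fstar"
      by (intro INF_lower2[of w]) (auto simp: ind_def)
    show "ereal fstar \<le> (INF y. f y + ind C y)"
      using fstar_min by (intro INF_greatest) (auto simp: ind_def)
  qed
  then show ?thesis unfolding subopt_def using x by (simp add: ind_def)
qed

lemma Dfun_eq_real:
  assumes "x \<in> C" "s \<in> C" "x + \<theta> *\<^sub>R (s - x) \<in> C"
    and "f x = ereal a" "f (x + \<theta> *\<^sub>R (s - x)) = ereal b"
  shows "Dfun f C g x s \<theta> = ereal (b - a - \<theta> * (g \<bullet> (s - x)))"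
  using assms unfolding Dfun_def bregman_def by (simp add: ind_def)

lemma inner_le_gap:
  assumes x: "x \<in> C" "f x = ereal a" and s: "s \<in> C"
  shows "ereal (g \<bullet> (x - s)) \<le> gap f C x g"
proof -
  have "ereal (g \<bullet> x - a) \<le> econj f g"
    unfolding econj_def using x by (intro SUP_upper2[of x]) auto
  moreover have "ereal (- (g \<bullet> s)) \<le> econj (ind C) (- g)"
    unfolding econj_def using s by (intro SUP_upper2[of s]) (auto simp: ind_def)
  ultimately have "ereal a + 0 + ereal (g \<bullet> x - a) + ereal (- (g \<bullet> s))
      \<le> f x + ind C x + econj f g + econj (ind C) (- g)"
    using x by (intro add_mono) (auto simp: ind_def)
  then show ?thesis unfolding gap_def by (simp add: inner_diff_right)
qed

theorem proposition5:
  fixes N :: "real^'n \<Rightarrow> real" and f :: "real^'n \<Rightarrow> ereal" and C :: "(real^'n) set"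
    and p q \<mu> L K \<gamma> fstar :: real
  assumes norm: "is_norm N"
    and f: "closed_proper_convex f" and fdiff: "differentiable_on_set f C"
    and C: "closed C" "convex C"
    and p: "p \<ge> 2" and mu: "\<mu> > 0" and Cuc: "unif_convex_set N C p \<mu>"
    and q: "1 < q" "q \<le> 2" and L: "L > 0" and fsm: "unif_smooth_on N f C q L"
    and fstar_min: "\<forall>x\<in>C. ereal fstar \<le> f x"
    and Xstar_ne: "{x \<in> C. f x = ereal fstar} \<noteq> {}"
    and gamma: "0 \<le> \<gamma>" "\<gamma> \<le> 1" and K: "K > 0"
    and eb: "holder_error_bound N f C fstar \<gamma> K"
  shows "weak_growth f C q (\<gamma> * q / p) (L * (p * K / \<mu>) powr (q / p))"
  unfolding weak_growth_def
proof (intro conjI ballI allI impI)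
  let ?F = "\<lambda>z. real_of_ereal (f z)"
  let ?M = "L * (p * K / \<mu>) powr (q / p)"
  show "0 < ?M" using L K mu p by simp
  fix x g s :: "real^'n" and \<theta> :: real
  assume x: "x \<in> C" and g: "is_grad f x g" and "s \<in> C \<and> (\<forall>y\<in>C. g \<bullet> s \<le> g \<bullet> y)"
    and "\<theta> \<in> {0..1}"
  then have s: "s \<in> C" and smin: "\<forall>y\<in>C. g \<bullet> s \<le> g \<bullet> y" and \<theta>: "0 \<le> \<theta>" "\<theta> \<le> 1" by auto
  have y: "x + \<theta> *\<^sub>R (s - x) \<in> C" using convex_segment_point[OF C(2) x s \<theta>] .
  note fin = differentiable_on_set_finite[OF fdiff]
  have "Dfun f C g x s \<theta> * ereal (rpow (real_of_ereal (subopt f C x)) (1 - \<gamma> * q / p))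
      = ereal ((?F (x + \<theta> *\<^sub>R (s - x)) - ?F x - \<theta> * (g \<bullet> (s - x))) * rpow (?F x - fstar) (1 - \<gamma> * q / p))"
    using Dfun_eq_real[where f = f, OF x s y fin[OF x] fin[OF y]] subopt_eq_real[where f = f, OF fstar_min Xstar_ne x fin[OF x]]
    by simp
  also have "\<dots> \<le> ereal (?M * \<theta> powr q / q) * ereal (g \<bullet> (x - s))"
    using weak_growth_real[OF norm f fdiff C(2) p mu Cuc q L fsm fstar_min Xstar_ne gamma K eb
        x g s smin \<theta>] by simp
  also have "\<dots> \<le> ereal (?M * \<theta> powr q / q) * gap f C x g"
    using inner_le_gap[where f = f, OF x fin[OF x] s] L q by (intro ereal_mult_left_mono) auto
  finally show "Dfun f C g x s \<theta> * ereal (rpow (real_of_ereal (subopt f C x)) (1 - \<gamma> * q / p))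
      \<le> ereal (?M * \<theta> powr q / q) * gap f C x g" .
qed

end
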